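(* Let $K\subseteq\mathbb{R}^d$ be compact. The following are equivalent: (a) $(\mathcal{J}^1(K),\|\cdot\|_{\mathcal{J}^1(K)})$ is a Banach space; (b) $(C^1(K),\|\cdot\|_{C^1(K)})$ is a Banach space; (c) for every $x\in K$ there is $C_x>0$ such that for all $f\in C^1(K)$ and all $y\in K\setminus\{x\}$, $\frac{|f(y)-f(x)|}{|y-x|}\le C_x\|f\|_{C^1(K)}$.
   Context: A continuous $df:K\to\mathbb{R}^d$ is a continuous derivative of $f:K\to\mathbb{R}$ on $K$ if $\lim_{y\to x,\,y\in K\setminus\{x\}}\frac{f(y)-f(x)-\langle df(x),y-x\rangle}{|y-x|}=0$ for all $x\in K$. $\mathcal{J}^1(K)=\{(f,df): df \text{ is a continuous derivative of } f \text{ on } K\}$ with norm $\|(f,df)\|_{\mathcal{J}^1(K)}=\|f\|_K+\|df\|_K$ ($\|\cdot\|_K$ the sup norm on $K$). $C^1(K)$ is the projection of $\mathcal{J}^1(K)$ onto the first coordinate, with the quotient norm $\|f\|_{C^1(K)}=\|f\|_K+\inf\{\|df\|_K: df \text{ a continuous derivative of } f\}$. *)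

theory Defs
  imports "HOL-Analysis.Analysis"
begin

definition supnorm :: "'a set \<Rightarrow> ('a \<Rightarrow> 'b::real_normed_vector) \<Rightarrow> real" where
  "supnorm K g = (if K = {} then 0 else (SUP x\<in>K. norm (g x)))"

definition cont_deriv_on :: "'a::euclidean_space set \<Rightarrow> ('a \<Rightarrow> real) \<Rightarrow> ('a \<Rightarrow> 'a) \<Rightarrow> bool" where
  "cont_deriv_on K f df \<longleftrightarrow> continuous_on K df \<and>
     (\<forall>x\<in>K. ((\<lambda>y. (f y - f x - inner (df x) (y - x)) / norm (y - x)) \<longlongrightarrow> 0) (at x within K))"

definition J1 :: "'a::euclidean_space set \<Rightarrow> (('a \<Rightarrow> real) \<times> ('a \<Rightarrow> 'a)) set" where
  "J1 K = {(f, df). cont_deriv_on K f df}"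

definition J1norm :: "'a::euclidean_space set \<Rightarrow> (('a \<Rightarrow> real) \<times> ('a \<Rightarrow> 'a)) \<Rightarrow> real" where
  "J1norm K p = supnorm K (fst p) + supnorm K (snd p)"

definition C1 :: "'a::euclidean_space set \<Rightarrow> ('a \<Rightarrow> real) set" where
  "C1 K = fst ` J1 K"

definition C1norm :: "'a::euclidean_space set \<Rightarrow> ('a \<Rightarrow> real) \<Rightarrow> real" where
  "C1norm K f = supnorm K f + (INF df\<in>{df. cont_deriv_on K f df}. supnorm K df)"

definition J1_banach :: "'a::euclidean_space set \<Rightarrow> bool" where
  "J1_banach K \<longleftrightarrow> (\<forall>s :: nat \<Rightarrow> ('a \<Rightarrow> real) \<times> ('a \<Rightarrow> 'a).
     (\<forall>n. s n \<in> J1 K) \<and>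
     (\<forall>e>0. \<exists>N. \<forall>m\<ge>N. \<forall>n\<ge>N.
        J1norm K (\<lambda>x. fst (s m) x - fst (s n) x, \<lambda>x. snd (s m) x - snd (s n) x) < e)
     \<longrightarrow> (\<exists>l\<in>J1 K. (\<lambda>n. J1norm K (\<lambda>x. fst (s n) x - fst l x, \<lambda>x. snd (s n) x - snd l x))
              \<longlonglongrightarrow> 0))"

definition C1_banach :: "'a::euclidean_space set \<Rightarrow> bool" where
  "C1_banach K \<longleftrightarrow> (\<forall>s :: nat \<Rightarrow> ('a \<Rightarrow> real).
     (\<forall>n. s n \<in> C1 K) \<and>
     (\<forall>e>0. \<exists>N. \<forall>m\<ge>N. \<forall>n\<ge>N. C1norm K (\<lambda>x. s m x - s n x) < e)
     \<longrightarrow> (\<exists>g\<in>C1 K. (\<lambda>n. C1norm K (\<lambda>x. s n x - g x)) \<longlonglongrightarrow> 0))"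

end

theory Submission
  imports Defs
begin

text \<open>If the difference quotients at every point x are bounded by C_x times the C^1 norm,
  a Cauchy sequence in J^1(K) converges uniformly together with its derivatives, and the bound
  controls the first-order remainder of the limit uniformly in y, so the limit function again has
  the limit of the derivatives as continuous derivative: J^1(K) is complete. Completeness passes
  to the quotient C^1(K) by lifting a geometrically fast Cauchy subsequence to J^1(K). Conversely,
  if the bound fails at x, a gliding hump argument adds up rescaled witnesses of the failure with
  rapidly shrinking norms; completeness of C^1(K) makes the sum a C^1 function, yet its difference
  quotients at x are unbounded, which is impossible for a function differentiable at x.\<close>

abbreviation pair_diff ::
    "('a \<Rightarrow> real) \<times> ('a \<Rightarrow> 'a::real_vector) \<Rightarrow> ('a \<Rightarrow> real) \<times> ('a \<Rightarrow> 'a) \<Rightarrow> ('a \<Rightarrow> real) \<times> ('a \<Rightarrow> 'a)"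
  where "pair_diff p q \<equiv> (\<lambda>x. fst p x - fst q x, \<lambda>x. snd p x - snd q x)"

lemma supnorm_upper:
  assumes "bounded (g ` K)" and "y \<in> K"
  shows "norm (g y) \<le> supnorm K g"
proof -
  obtain a where "\<forall>z\<in>K. norm (g z) \<le> a" using assms(1) by (auto simp: bounded_iff)
  then have "bdd_above ((\<lambda>z. norm (g z)) ` K)" by (auto intro: bdd_aboveI2)
  then show ?thesis using assms(2) unfolding supnorm_def by (auto intro: cSUP_upper)
qed

lemma supnorm_least: "(\<And>y. y \<in> K \<Longrightarrow> norm (g y) \<le> B) \<Longrightarrow> 0 \<le> B \<Longrightarrow> supnorm K g \<le> B"
  unfolding supnorm_def by (simp add: cSUP_least)

lemma supnorm_nonneg:
  assumes "bounded (g ` K)"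
  shows "0 \<le> supnorm K g"
proof (cases "K = {}")
  case False
  then obtain y where "y \<in> K" by blast
  then show ?thesis using supnorm_upper[OF assms] norm_ge_zero order_trans by blast
qed (simp add: supnorm_def)

lemma supnorm_add_le:
  assumes "bounded (f ` K)" "bounded (g ` K)"
  shows "supnorm K (\<lambda>x. f x + g x) \<le> supnorm K f + supnorm K g"
proof (rule supnorm_least)
  fix y assume "y \<in> K"
  then have "norm (f y) + norm (g y) \<le> supnorm K f + supnorm K g"
    using assms by (intro add_mono supnorm_upper)
  then show "norm (f y + g y) \<le> supnorm K f + supnorm K g"
    using norm_triangle_ineq order_trans by blast
qed (use supnorm_nonneg[OF assms(1)] supnorm_nonneg[OF assms(2)] in simp)

lemma supnorm_scaleR_le:
  assumes "bounded (g ` K)"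
  shows "supnorm K (\<lambda>x. c *\<^sub>R g x) \<le> \<bar>c\<bar> * supnorm K g"
proof (rule supnorm_least)
  fix y assume "y \<in> K"
  then show "norm (c *\<^sub>R g y) \<le> \<bar>c\<bar> * supnorm K g"
    using supnorm_upper[OF assms] by (simp add: mult_left_mono)
qed (use supnorm_nonneg[OF assms] in simp)

lemma supnorm_minus_commute: "supnorm K (\<lambda>x. f x - g x) = supnorm K (\<lambda>x. g x - f x)"
  unfolding supnorm_def by (simp add: norm_minus_commute)

lemma supnorm_tendsto_zero_if_uniform_limit:
  fixes F :: "nat \<Rightarrow> 'a \<Rightarrow> 'b::real_normed_vector"
  assumes "uniform_limit K F f sequentially"
  shows "(\<lambda>n. supnorm K (\<lambda>x. F n x - f x)) \<longlonglongrightarrow> 0"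
proof (rule LIMSEQ_I)
  fix r :: real assume "0 < r"
  then obtain N where N: "\<forall>n\<ge>N. \<forall>x\<in>K. dist (F n x) (f x) < r / 2"
    using assms half_gt_zero unfolding uniform_limit_sequentially_iff by blast
  have "norm (supnorm K (\<lambda>x. F n x - f x) - 0) < r" if "N \<le> n" for n
  proof -
    have pt: "norm (F n x - f x) \<le> r / 2" if "x \<in> K" for x
      using N \<open>N \<le> n\<close> that by (auto simp: dist_norm less_imp_le)
    then have "bounded ((\<lambda>x. F n x - f x) ` K)" unfolding bounded_iff by blast
    then show ?thesis
      using supnorm_nonneg supnorm_least[OF pt] \<open>0 < r\<close> by fastforce
  qed
  then show "\<exists>N. \<forall>n\<ge>N. norm (supnorm K (\<lambda>x. F n x - f x) - 0) < r" by blast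
qed

lemma cont_deriv_on_imp_continuous_on:
  assumes "cont_deriv_on K f df"
  shows "continuous_on K f"
  unfolding continuous_on_eq_continuous_within continuous_within
proof
  fix x assume x: "x \<in> K"
  define q where "q y = (f y - f x - inner (df x) (y - x)) / norm (y - x)" for y
  have "(q \<longlongrightarrow> 0) (at x within K)"
    using assms x unfolding cont_deriv_on_def q_def by auto
  then have "((\<lambda>y. q y * norm (y - x) + inner (df x) (y - x)) \<longlongrightarrow> 0 * 0 + 0) (at x within K)"
    by (intro tendsto_intros) (auto intro!: tendsto_eq_intros)
  moreover have "\<forall>\<^sub>F y in at x within K. q y * norm (y - x) + inner (df x) (y - x) = f y - f x"
    unfolding eventually_at_filter by (auto simp: q_def)
  ultimately have "((\<lambda>y. f y - f x) \<longlongrightarrow> 0) (at x within K)"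
    by (simp add: Lim_transform_eventually)
  then show "(f \<longlongrightarrow> f x) (at x within K)" by (simp add: LIM_zero_iff)
qed

lemma cont_deriv_on_bounded:
  assumes "compact K" "cont_deriv_on K f df"
  shows "bounded (f ` K)" and "bounded (df ` K)"
  using assms cont_deriv_on_imp_continuous_on[OF assms(2)]
  by (simp_all add: compact_imp_bounded compact_continuous_image cont_deriv_on_def)

lemma cont_deriv_on_add:
  assumes "cont_deriv_on K f df" "cont_deriv_on K g dg"
  shows "cont_deriv_on K (\<lambda>x. f x + g x) (\<lambda>x. df x + dg x)"
  unfolding cont_deriv_on_def
proof (intro conjI ballI)
  show "continuous_on K (\<lambda>x. df x + dg x)"
    using assms by (intro continuous_on_add) (auto simp: cont_deriv_on_def)
  fix x assume "x \<in> K"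
  then have "((\<lambda>y. (f y - f x - inner (df x) (y - x)) / norm (y - x)
      + (g y - g x - inner (dg x) (y - x)) / norm (y - x)) \<longlongrightarrow> 0 + 0) (at x within K)"
    using assms by (intro tendsto_add) (auto simp: cont_deriv_on_def)
  then show "((\<lambda>y. (f y + g y - (f x + g x) - inner (df x + dg x) (y - x)) / norm (y - x))
      \<longlongrightarrow> 0) (at x within K)"
    by (simp add: add_divide_distrib[symmetric] algebra_simps)
qed

lemma cont_deriv_on_scale:
  assumes "cont_deriv_on K f df"
  shows "cont_deriv_on K (\<lambda>x. c * f x) (\<lambda>x. c *\<^sub>R df x)"
  unfolding cont_deriv_on_def
proof (intro conjI ballI)
  show "continuous_on K (\<lambda>x. c *\<^sub>R df x)"
    using assms by (intro continuous_on_scaleR continuous_on_const) (auto simp: cont_deriv_on_def)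
  fix x assume "x \<in> K"
  then have "((\<lambda>y. c * ((f y - f x - inner (df x) (y - x)) / norm (y - x))) \<longlongrightarrow> c * 0)
      (at x within K)"
    using assms by (intro tendsto_mult_left) (auto simp: cont_deriv_on_def)
  then show "((\<lambda>y. (c * f y - c * f x - inner (c *\<^sub>R df x) (y - x)) / norm (y - x))
      \<longlongrightarrow> 0) (at x within K)"
    by (simp add: algebra_simps)
qed

lemma cont_deriv_on_diff:
  assumes "cont_deriv_on K f df" "cont_deriv_on K g dg"
  shows "cont_deriv_on K (\<lambda>x. f x - g x) (\<lambda>x. df x - dg x)"
  using cont_deriv_on_add[OF assms(1) cont_deriv_on_scale[OF assms(2), of "-1"]] by simp

lemma cont_deriv_on_zero: "cont_deriv_on K (\<lambda>x. 0) (\<lambda>x. 0)"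
  unfolding cont_deriv_on_def by simp

lemma remainder_tendsto_zero_if_approximable:
  fixes f :: "'a::real_inner \<Rightarrow> real"
  assumes approx: "\<And>e. e > 0 \<Longrightarrow> \<exists>F G.
      ((\<lambda>y. (F y - F x - inner G (y - x)) / norm (y - x)) \<longlongrightarrow> 0) (at x within K)
      \<and> (\<forall>y\<in>K - {x}. \<bar>(f y - F y) - (f x - F x)\<bar> \<le> e * norm (y - x)) \<and> norm (g - G) \<le> e"
  shows "((\<lambda>y. (f y - f x - inner g (y - x)) / norm (y - x)) \<longlongrightarrow> 0) (at x within K)"
proof (rule tendstoI)
  fix eps :: real assume "eps > 0"
  then obtain F G where F: "((\<lambda>y. (F y - F x - inner G (y - x)) / norm (y - x)) \<longlongrightarrow> 0) (at x within K)"
    and close: "\<forall>y\<in>K - {x}. \<bar>(f y - F y) - (f x - F x)\<bar> \<le> eps / 3 * norm (y - x)"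
    and G: "norm (g - G) \<le> eps / 3"
    using approx[of "eps / 3"] by auto
  from tendstoD[OF F, of "eps / 3"] \<open>eps > 0\<close>
  have "\<forall>\<^sub>F y in at x within K. \<bar>F y - F x - inner G (y - x)\<bar> / norm (y - x) < eps / 3"
    by simp
  moreover have "\<forall>\<^sub>F y in at x within K. y \<in> K - {x}"
    unfolding eventually_at_filter by auto
  ultimately show "\<forall>\<^sub>F y in at x within K. dist ((f y - f x - inner g (y - x)) / norm (y - x)) 0 < eps"
  proof eventually_elim
    case (elim y)
    then have "norm (y - x) > 0" by auto
    have "\<bar>F y - F x - inner G (y - x)\<bar> < eps / 3 * norm (y - x)"
      using elim(1) \<open>norm (y - x) > 0\<close> by (simp add: pos_divide_less_eq)
    moreover have "\<bar>(f y - F y) - (f x - F x)\<bar> \<le> eps / 3 * norm (y - x)"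
      using close elim(2) by blast
    moreover have "\<bar>inner (g - G) (y - x)\<bar> \<le> eps / 3 * norm (y - x)"
      using Cauchy_Schwarz_ineq2[of "g - G" "y - x"] G by (meson mult_right_mono norm_ge_zero order_trans)
    moreover have "f y - f x - inner g (y - x) = (F y - F x - inner G (y - x))
        + ((f y - F y) - (f x - F x)) - inner (g - G) (y - x)"
      by (simp add: inner_diff_left)
    ultimately have "\<bar>f y - f x - inner g (y - x)\<bar> < eps * norm (y - x)" by linarith
    then show ?case using \<open>norm (y - x) > 0\<close> by (simp add: pos_divide_less_eq)
  qed
qed

lemma mem_J1_iff: "p \<in> J1 K \<longleftrightarrow> cont_deriv_on K (fst p) (snd p)"
  unfolding J1_def by (cases p) auto

lemma mem_C1_iff: "f \<in> C1 K \<longleftrightarrow> (\<exists>df. cont_deriv_on K f df)"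
  unfolding C1_def J1_def by force

lemma J1_diff: "p \<in> J1 K \<Longrightarrow> q \<in> J1 K \<Longrightarrow> pair_diff p q \<in> J1 K"
  unfolding mem_J1_iff by (simp add: cont_deriv_on_diff)

lemma C1_add: "f \<in> C1 K \<Longrightarrow> g \<in> C1 K \<Longrightarrow> (\<lambda>x. f x + g x) \<in> C1 K"
  unfolding mem_C1_iff using cont_deriv_on_add by blast

lemma C1_diff: "f \<in> C1 K \<Longrightarrow> g \<in> C1 K \<Longrightarrow> (\<lambda>x. f x - g x) \<in> C1 K"
  unfolding mem_C1_iff using cont_deriv_on_diff by blast

lemma C1_scale: "f \<in> C1 K \<Longrightarrow> (\<lambda>x. c * f x) \<in> C1 K"
  unfolding mem_C1_iff using cont_deriv_on_scale by blast

lemma bdd_below_supnorm_derivs: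
  assumes "compact K"
  shows "bdd_below ((\<lambda>df. supnorm K df) ` {df. cont_deriv_on K f df})"
proof (rule bdd_belowI2[of _ 0])
  show "0 \<le> supnorm K df" if "df \<in> {df. cont_deriv_on K f df}" for df
    using that supnorm_nonneg cont_deriv_on_bounded(2)[OF assms] by blast
qed

lemma C1norm_le:
  assumes "compact K" "cont_deriv_on K f df"
  shows "C1norm K f \<le> supnorm K f + supnorm K df"
  using cINF_lower[OF bdd_below_supnorm_derivs[OF assms(1)], of df] assms(2)
  unfolding C1norm_def by simp

lemma C1norm_approx:
  assumes "compact K" "f \<in> C1 K" "e > 0"
  obtains df where "cont_deriv_on K f df" "supnorm K f + supnorm K df < C1norm K f + e"
proof -
  let ?I = "INF df\<in>{df. cont_deriv_on K f df}. supnorm K df"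
  have "{df. cont_deriv_on K f df} \<noteq> {}" using assms(2) mem_C1_iff by blast
  moreover have "?I < ?I + e" using assms(3) by simp
  ultimately obtain df where "cont_deriv_on K f df" "supnorm K df < ?I + e"
    using cINF_less_iff[OF _ bdd_below_supnorm_derivs[OF assms(1)]] by blast
  then show ?thesis using that unfolding C1norm_def by force
qed

lemma supnorm_le_C1norm:
  assumes "compact K" "f \<in> C1 K"
  shows "supnorm K f \<le> C1norm K f"
proof -
  obtain df where "cont_deriv_on K f df" using assms(2) mem_C1_iff by blast
  then have "0 \<le> (INF df\<in>{df. cont_deriv_on K f df}. supnorm K df)"
  proof (intro cINF_greatest)
    show "0 \<le> supnorm K df'" if "df' \<in> {df. cont_deriv_on K f df}" for df'
      using that supnorm_nonneg cont_deriv_on_bounded(2)[OF assms(1)] by blast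
  qed blast
  then show ?thesis unfolding C1norm_def by linarith
qed

lemma abs_le_C1norm:
  assumes "compact K" "f \<in> C1 K" "y \<in> K"
  shows "\<bar>f y\<bar> \<le> C1norm K f"
proof -
  obtain df where "cont_deriv_on K f df" using assms(2) mem_C1_iff by blast
  then have "norm (f y) \<le> supnorm K f"
    using supnorm_upper[OF cont_deriv_on_bounded(1)[OF assms(1)] assms(3)] by blast
  then show ?thesis using supnorm_le_C1norm[OF assms(1,2)] by simp
qed

lemma C1norm_nonneg:
  assumes "compact K" "f \<in> C1 K"
  shows "0 \<le> C1norm K f"
proof -
  obtain df where "cont_deriv_on K f df" using assms(2) mem_C1_iff by blast
  then have "0 \<le> supnorm K f" using supnorm_nonneg cont_deriv_on_bounded(1)[OF assms(1)] by blast
  then show ?thesis using supnorm_le_C1norm[OF assms] by linarith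
qed

lemma C1norm_add_le:
  assumes K: "compact K" and "f \<in> C1 K" "g \<in> C1 K"
  shows "C1norm K (\<lambda>x. f x + g x) \<le> C1norm K f + C1norm K g"
proof (rule field_le_epsilon)
  fix e :: real assume "0 < e"
  then obtain df dg where df: "cont_deriv_on K f df" "supnorm K f + supnorm K df < C1norm K f + e/2"
    and dg: "cont_deriv_on K g dg" "supnorm K g + supnorm K dg < C1norm K g + e/2"
    using C1norm_approx[OF K] assms(2,3) half_gt_zero by metis
  have "C1norm K (\<lambda>x. f x + g x) \<le> supnorm K (\<lambda>x. f x + g x) + supnorm K (\<lambda>x. df x + dg x)"
    by (rule C1norm_le[OF K cont_deriv_on_add[OF df(1) dg(1)]])
  also have "\<dots> \<le> (supnorm K f + supnorm K g) + (supnorm K df + supnorm K dg)"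
    using cont_deriv_on_bounded[OF K df(1)] cont_deriv_on_bounded[OF K dg(1)]
    by (intro add_mono supnorm_add_le)
  finally show "C1norm K (\<lambda>x. f x + g x) \<le> C1norm K f + C1norm K g + e"
    using df(2) dg(2) by linarith
qed

lemma C1norm_scale_le:
  assumes K: "compact K" and f: "f \<in> C1 K"
  shows "C1norm K (\<lambda>x. c * f x) \<le> \<bar>c\<bar> * C1norm K f"
proof (rule field_le_epsilon)
  fix e :: real assume "0 < e"
  then have e: "0 < e / (\<bar>c\<bar> + 1)" by simp
  obtain df where df: "cont_deriv_on K f df"
    and approx: "supnorm K f + supnorm K df < C1norm K f + e / (\<bar>c\<bar> + 1)"
    using C1norm_approx[OF K f e] by blast
  have "C1norm K (\<lambda>x. c * f x) \<le> supnorm K (\<lambda>x. c * f x) + supnorm K (\<lambda>x. c *\<^sub>R df x)"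
    by (rule C1norm_le[OF K cont_deriv_on_scale[OF df]])
  also have "\<dots> \<le> \<bar>c\<bar> * (supnorm K f + supnorm K df)"
    using supnorm_scaleR_le[OF cont_deriv_on_bounded(1)[OF K df], of c]
      supnorm_scaleR_le[OF cont_deriv_on_bounded(2)[OF K df], of c]
    by (simp add: distrib_left)
  also have "\<dots> \<le> \<bar>c\<bar> * (C1norm K f + e / (\<bar>c\<bar> + 1))"
    using approx by (intro mult_left_mono) auto
  also have "\<dots> \<le> \<bar>c\<bar> * C1norm K f + e"
    using \<open>0 < e\<close> by (simp add: distrib_left field_simps)
  finally show "C1norm K (\<lambda>x. c * f x) \<le> \<bar>c\<bar> * C1norm K f + e" .
qed

lemma C1norm_minus_commute:
  assumes "compact K" "f \<in> C1 K" "g \<in> C1 K"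
  shows "C1norm K (\<lambda>x. f x - g x) = C1norm K (\<lambda>x. g x - f x)"
proof -
  have "C1norm K (\<lambda>x. b x - a x) \<le> C1norm K (\<lambda>x. a x - b x)" if "a \<in> C1 K" "b \<in> C1 K" for a b
    using C1norm_scale_le[OF assms(1) C1_diff[OF that], of "-1"] by simp
  then show ?thesis using assms(2,3) by (meson antisym)
qed

lemma C1norm_fst_le_J1norm: "compact K \<Longrightarrow> p \<in> J1 K \<Longrightarrow> C1norm K (fst p) \<le> J1norm K p"
  unfolding J1norm_def mem_J1_iff by (rule C1norm_le)

lemma J1norm_triangle:
  assumes K: "compact K" and J: "a \<in> J1 K" "b \<in> J1 K" "c \<in> J1 K"
  shows "J1norm K (pair_diff a c) \<le> J1norm K (pair_diff a b) + J1norm K (pair_diff b c)"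
proof -
  have ab: "cont_deriv_on K (\<lambda>x. fst a x - fst b x) (\<lambda>x. snd a x - snd b x)"
    and bc: "cont_deriv_on K (\<lambda>x. fst b x - fst c x) (\<lambda>x. snd b x - snd c x)"
    using J J1_diff unfolding mem_J1_iff by auto
  have "supnorm K (\<lambda>x. fst a x - fst c x)
      \<le> supnorm K (\<lambda>x. fst a x - fst b x) + supnorm K (\<lambda>x. fst b x - fst c x)"
    using supnorm_add_le[OF cont_deriv_on_bounded(1)[OF K ab] cont_deriv_on_bounded(1)[OF K bc]]
    by simp
  moreover have "supnorm K (\<lambda>x. snd a x - snd c x)
      \<le> supnorm K (\<lambda>x. snd a x - snd b x) + supnorm K (\<lambda>x. snd b x - snd c x)"
    using supnorm_add_le[OF cont_deriv_on_bounded(2)[OF K ab] cont_deriv_on_bounded(2)[OF K bc]]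
    by simp
  ultimately show ?thesis unfolding J1norm_def by simp
qed

lemma J1norm_minus_commute: "J1norm K (pair_diff p q) = J1norm K (pair_diff q p)"
  unfolding J1norm_def fst_conv snd_conv
  by (subst (1 2) supnorm_minus_commute) (rule refl)

lemma C1norm_telescope:
  assumes K: "compact K" and S: "\<And>j. S j \<in> C1 K" and "n \<le> m"
  shows "C1norm K (\<lambda>x. S m x - S n x) \<le> (\<Sum>j\<in>{n..<m}. C1norm K (\<lambda>x. S (Suc j) x - S j x))"
  using \<open>n \<le> m\<close>
proof (induction m rule: dec_induct)
  case base
  have "supnorm K (\<lambda>x. 0::real) + supnorm K (\<lambda>x. 0::'a) \<le> 0"
    by (intro add_nonpos_nonpos supnorm_least) auto
  then show ?case using C1norm_le[OF K cont_deriv_on_zero] by simp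
next
  case (step k)
  have "C1norm K (\<lambda>x. S (Suc k) x - S n x)
      \<le> C1norm K (\<lambda>x. S k x - S n x) + C1norm K (\<lambda>x. S (Suc k) x - S k x)"
    using C1norm_add_le[OF K C1_diff[OF S S] C1_diff[OF S S], of k n "Suc k" k] by simp
  then show ?case using step.IH step.hyps by simp
qed

lemma J1norm_telescope:
  assumes K: "compact K" and p: "\<And>j. p j \<in> J1 K" and "n \<le> m"
  shows "J1norm K (pair_diff (p m) (p n)) \<le> (\<Sum>j\<in>{n..<m}. J1norm K (pair_diff (p (Suc j)) (p j)))"
  using \<open>n \<le> m\<close>
proof (induction m rule: dec_induct)
  case base
  have "supnorm K (\<lambda>x. 0::real) + supnorm K (\<lambda>x. 0::'a) \<le> 0"
    by (intro add_nonpos_nonpos supnorm_least) auto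
  then show ?case by (simp add: J1norm_def)
next
  case (step k)
  then show ?case using J1norm_triangle[OF K p p p, of "Suc k" n k] by simp
qed

lemma C1_diff_quotient_bounded:
  assumes K: "compact K" and f: "f \<in> C1 K" and x: "x \<in> K"
  shows "\<exists>M. \<forall>y\<in>K - {x}. \<bar>f y - f x\<bar> / norm (y - x) \<le> M"
proof -
  obtain df where df: "cont_deriv_on K f df" using f mem_C1_iff by blast
  then have "((\<lambda>y. (f y - f x - inner (df x) (y - x)) / norm (y - x)) \<longlongrightarrow> 0) (at x within K)"
    using x by (auto simp: cont_deriv_on_def)
  from tendstoD[OF this, of 1]
  have "\<forall>\<^sub>F y in at x within K. \<bar>(f y - f x - inner (df x) (y - x)) / norm (y - x)\<bar> < 1"
    by simp
  then obtain \<delta> where \<delta>: "\<delta> > 0" and near: "\<And>y. y \<in> K \<Longrightarrow> y \<noteq> x \<Longrightarrow> dist y x < \<delta> \<Longrightarrow>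
      \<bar>f y - f x - inner (df x) (y - x)\<bar> < norm (y - x)"
    unfolding eventually_at by (auto simp: divide_less_eq)
  obtain B where B: "\<And>y. y \<in> K \<Longrightarrow> \<bar>f y\<bar> \<le> B"
    using cont_deriv_on_bounded(1)[OF K df] unfolding bounded_iff by auto
  have "\<bar>f y - f x\<bar> / norm (y - x) \<le> max (1 + norm (df x)) (2 * B / \<delta>)" if y: "y \<in> K - {x}" for y
  proof (cases "dist y x < \<delta>")
    case True
    have "\<bar>f y - f x\<bar> \<le> \<bar>f y - f x - inner (df x) (y - x)\<bar> + norm (df x) * norm (y - x)"
      using Cauchy_Schwarz_ineq2[of "df x" "y - x"] by linarith
    also have "\<dots> \<le> (1 + norm (df x)) * norm (y - x)"
      using near[OF _ _ True] y by (simp add: algebra_simps)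
    finally have "\<bar>f y - f x\<bar> / norm (y - x) \<le> 1 + norm (df x)"
      using y by (simp add: divide_le_eq)
    then show ?thesis by linarith
  next
    case False
    have "\<bar>f y\<bar> \<le> B" using B y by blast
    then have "\<bar>f y - f x\<bar> \<le> 2 * B" using B[OF x] by linarith
    then have "\<bar>f y - f x\<bar> / norm (y - x) \<le> 2 * B / norm (y - x)"
      by (simp add: divide_right_mono)
    also have "\<dots> \<le> 2 * B / \<delta>"
      using False \<delta> B[OF x] abs_ge_zero[of "f x"] y by (intro divide_left_mono) (auto simp: dist_norm)
    finally show ?thesis by linarith
  qed
  then show ?thesis by blast
qed

lemma C1norm_tendsto_imp_pointwise:
  assumes K: "compact K" and s: "\<And>n. s n \<in> C1 K" and g: "g \<in> C1 K"
    and lim: "(\<lambda>n. C1norm K (\<lambda>x. s n x - g x)) \<longlonglongrightarrow> 0" and z: "z \<in> K"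
  shows "(\<lambda>n. s n z) \<longlonglongrightarrow> g z"
proof -
  have "norm (s n z - g z) \<le> C1norm K (\<lambda>x. s n x - g x)" for n
    using abs_le_C1norm[OF K C1_diff[OF s g] z] by simp
  then have "(\<lambda>n. s n z - g z) \<longlonglongrightarrow> 0" by (intro Lim_null_comparison[OF _ lim]) simp
  then show ?thesis by (rule LIM_zero_cancel)
qed

lemma C1norm_tendsto_if_subseq:
  assumes K: "compact K" and s: "\<And>n. s n \<in> C1 K" and g: "g \<in> C1 K"
    and cauchy: "\<forall>e>0. \<exists>N. \<forall>m\<ge>N. \<forall>n\<ge>N. C1norm K (\<lambda>x. s m x - s n x) < e"
    and r: "strict_mono r" and sub: "(\<lambda>k. C1norm K (\<lambda>x. s (r k) x - g x)) \<longlonglongrightarrow> 0"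
  shows "(\<lambda>n. C1norm K (\<lambda>x. s n x - g x)) \<longlonglongrightarrow> 0"
proof (rule LIMSEQ_I)
  fix eps :: real assume "0 < eps"
  then obtain N where N: "\<forall>m\<ge>N. \<forall>n\<ge>N. C1norm K (\<lambda>x. s m x - s n x) < eps / 2"
    using cauchy half_gt_zero by blast
  obtain k0 where "\<forall>k\<ge>k0. norm (C1norm K (\<lambda>x. s (r k) x - g x) - 0) < eps / 2"
    using LIMSEQ_D[OF sub, of "eps / 2"] \<open>0 < eps\<close> by auto
  then obtain k where k: "N \<le> k" "C1norm K (\<lambda>x. s (r k) x - g x) < eps / 2"
    by (metis max.cobounded1 max.cobounded2 abs_less_iff diff_zero real_norm_def)
  have "norm (C1norm K (\<lambda>x. s n x - g x) - 0) < eps" if "N \<le> n" for n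
  proof -
    have "C1norm K (\<lambda>x. s n x - g x)
        \<le> C1norm K (\<lambda>x. s n x - s (r k) x) + C1norm K (\<lambda>x. s (r k) x - g x)"
      using C1norm_add_le[OF K C1_diff[OF s s] C1_diff[OF s g], of n "r k" "r k"] by simp
    moreover have "C1norm K (\<lambda>x. s n x - s (r k) x) < eps / 2"
      using N that k(1) seq_suble[OF r, of k] by simp
    ultimately show ?thesis using k(2) C1norm_nonneg[OF K C1_diff[OF s g]] by simp
  qed
  then show "\<exists>N. \<forall>n\<ge>N. norm (C1norm K (\<lambda>x. s n x - g x) - 0) < eps" by blast
qed

lemma J1_lift_of_C1norm_less:
  assumes K: "compact K" and df: "cont_deriv_on K f df" and g: "g \<in> C1 K"
    and less: "C1norm K (\<lambda>x. g x - f x) < c"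
  obtains dg where "cont_deriv_on K g dg" "J1norm K (pair_diff (g, dg) (f, df)) < c"
proof -
  have e: "(\<lambda>x. g x - f x) \<in> C1 K" using C1_diff[OF g] df mem_C1_iff by blast
  obtain \<delta> where \<delta>: "cont_deriv_on K (\<lambda>x. g x - f x) \<delta>"
    and "supnorm K (\<lambda>x. g x - f x) + supnorm K \<delta> < c"
    using C1norm_approx[OF K e, of "c - C1norm K (\<lambda>x. g x - f x)"] less by auto
  moreover have "cont_deriv_on K g (\<lambda>x. df x + \<delta> x)"
    using cont_deriv_on_add[OF df \<delta>] by simp
  ultimately show ?thesis using that[of "\<lambda>x. df x + \<delta> x"] by (simp add: J1norm_def)
qed

lemma sum_half_powers_le: "(\<Sum>j\<in>{n..<m}. (1/2::real)^j) \<le> 2 * (1/2)^n"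
proof (cases "n \<le> m")
  case True
  then have "(\<Sum>j\<in>{n..<m}. (1/2::real)^j) = 2 * ((1/2)^n - (1/2)^m)"
    by (induction m rule: dec_induct) (simp_all add: algebra_simps)
  then show ?thesis by simp
qed simp

lemma sum_weighted_half_powers_le:
  assumes "\<And>j. n \<le> j \<Longrightarrow> a j \<le> B" and "0 \<le> B"
  shows "(\<Sum>j\<in>{n..<m}. a j * (1/2::real)^(j+2)) \<le> B * (1/2)^n / 2"
proof -
  have "(\<Sum>j\<in>{n..<m}. a j * (1/2::real)^(j+2)) \<le> (\<Sum>j\<in>{n..<m}. B / 4 * (1/2)^j)"
    using assms(1) by (intro sum_mono) (simp add: power_add mult_right_mono)
  also have "\<dots> = B / 4 * (\<Sum>j\<in>{n..<m}. (1/2)^j)" by (simp add: sum_distrib_left)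
  also have "\<dots> \<le> B / 4 * (2 * (1/2)^n)"
    using sum_half_powers_le[of n m] \<open>0 \<le> B\<close> by (intro mult_left_mono) auto
  finally show ?thesis by simp
qed

lemma cauchy_if_geometric:
  fixes d :: "nat \<Rightarrow> nat \<Rightarrow> real"
  assumes bound: "\<And>m n. n \<le> m \<Longrightarrow> d m n \<le> c * (1/2)^n"
    and sym: "\<And>m n. d m n = d n m" and "0 \<le> c" "0 < e"
  shows "\<exists>N. \<forall>m\<ge>N. \<forall>n\<ge>N. d m n < e"
proof -
  obtain N where N: "(1/2::real)^N < e / (c + 1)"
  proof -
    have "0 < e / (c + 1)" using assms(3,4) by simp
    then show ?thesis using real_arch_pow_inv[of "e / (c + 1)" "1/2::real"] that by auto
  qed
  have main: "d m n < e" if "N \<le> n" "n \<le> m" for m n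
  proof -
    have "c * (1/2)^n \<le> c * (1/2::real)^N"
      using \<open>0 \<le> c\<close> that(1) by (intro mult_left_mono power_decreasing) auto
    then have "d m n \<le> c * (1/2)^N" using bound[OF that(2)] by linarith
    also have "\<dots> \<le> (c + 1) * (1/2)^N" by simp
    also have "\<dots> < e" using N \<open>0 \<le> c\<close> by (simp add: pos_less_divide_eq mult.commute)
    finally show ?thesis .
  qed
  show ?thesis
  proof (intro exI[of _ N] allI impI)
    fix m n assume "N \<le> m" "N \<le> n"
    then show "d m n < e"
      using main[of n m] main[of m n] sym[of m n] by (cases "n \<le> m") auto
  qed
qed

lemma fast_subsequence:
  fixes d :: "nat \<Rightarrow> nat \<Rightarrow> real"
  assumes "\<And>e. e > 0 \<Longrightarrow> \<exists>N. \<forall>m\<ge>N. \<forall>n\<ge>N. d m n < e"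
  obtains r where "strict_mono r" "\<And>k m n. r k \<le> m \<Longrightarrow> r k \<le> n \<Longrightarrow> d m n < (1/2)^k"
proof -
  let ?P = "\<lambda>k N. \<forall>m\<ge>N. \<forall>n\<ge>N. d m n < (1/2)^k"
  have "\<exists>N'. ?P (Suc k) N' \<and> N < N'" for k N
  proof -
    obtain N' where "?P (Suc k) N'" using assms[of "(1/2)^Suc k"] by auto
    then show ?thesis by (intro exI[of _ "max N' (Suc N)"]) auto
  qed
  moreover have "\<exists>N. ?P 0 N" using assms[of 1] by auto
  ultimately obtain r where "\<forall>k. ?P k (r k) \<and> r k < r (Suc k)"
    using dependent_nat_choice[of ?P "\<lambda>_ N N'. N < N'"] by blast
  moreover from this have "strict_mono r" by (simp add: strict_mono_Suc_iff)
  ultimately show ?thesis using that by blast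
qed

section \<open>Bounded difference quotients make \<open>J1\<close> complete\<close>

lemma J1_Cauchy_imp_uniformly_Cauchy:
  assumes K: "compact K" and J: "\<And>n. s n \<in> J1 K"
    and cauchy: "\<forall>e>0. \<exists>N. \<forall>m\<ge>N. \<forall>n\<ge>N. J1norm K (pair_diff (s m) (s n)) < e"
  shows "uniformly_Cauchy_on K (\<lambda>n. fst (s n))" and "uniformly_Cauchy_on K (\<lambda>n. snd (s n))"
proof -
  have bound: "dist (fst (s m) x) (fst (s n) x) \<le> J1norm K (pair_diff (s m) (s n))
      \<and> dist (snd (s m) x) (snd (s n) x) \<le> J1norm K (pair_diff (s m) (s n))" if "x \<in> K" for m n x
  proof -
    have cd: "cont_deriv_on K (\<lambda>x. fst (s m) x - fst (s n) x) (\<lambda>x. snd (s m) x - snd (s n) x)"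
      using J1_diff[OF J J, of m n] unfolding mem_J1_iff by simp
    note bdd = cont_deriv_on_bounded[OF K cd]
    show ?thesis
      using supnorm_upper[OF bdd(1) that] supnorm_upper[OF bdd(2) that]
        supnorm_nonneg[OF bdd(1)] supnorm_nonneg[OF bdd(2)]
      unfolding J1norm_def by (simp add: dist_norm)
  qed
  show "uniformly_Cauchy_on K (\<lambda>n. fst (s n))" "uniformly_Cauchy_on K (\<lambda>n. snd (s n))"
    unfolding uniformly_Cauchy_on_def using cauchy bound by (meson le_less_trans)+
qed

lemma diff_quotient_of_limit_le:
  assumes x: "x \<in> K" and y: "y \<in> K - {x}" and "0 \<le> C"
    and quot: "\<forall>h\<in>C1 K. \<forall>y\<in>K - {x}. \<bar>h y - h x\<bar> / norm (y - x) \<le> C * C1norm K h"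
    and F: "\<And>m. F m \<in> C1 K" and lim: "\<And>z. z \<in> K \<Longrightarrow> (\<lambda>m. F m z) \<longlonglongrightarrow> f z"
    and tail: "\<And>m. N \<le> m \<Longrightarrow> C1norm K (\<lambda>z. F m z - F n z) \<le> e"
  shows "\<bar>(f y - F n y) - (f x - F n x)\<bar> / norm (y - x) \<le> C * e"
proof (rule LIMSEQ_le_const2)
  show "(\<lambda>m. \<bar>(F m y - F n y) - (F m x - F n x)\<bar> / norm (y - x))
      \<longlonglongrightarrow> \<bar>(f y - F n y) - (f x - F n x)\<bar> / norm (y - x)"
    using x y by (intro tendsto_intros lim) auto
  have "\<bar>(F m y - F n y) - (F m x - F n x)\<bar> / norm (y - x) \<le> C * e" if "N \<le> m" for m
    using quot[rule_format, OF C1_diff[OF F F] y, of m n]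
      mult_left_mono[OF tail[OF that] \<open>0 \<le> C\<close>] by simp
  then show "\<exists>N. \<forall>m\<ge>N. \<bar>(F m y - F n y) - (F m x - F n x)\<bar> / norm (y - x) \<le> C * e" by blast
qed

lemma cont_deriv_on_uniform_limit:
  assumes K: "compact K" and cd: "\<And>n. cont_deriv_on K (F n) (G n)"
    and Ff: "uniform_limit K F f sequentially" and Gg: "uniform_limit K G g sequentially"
    and cauchy: "\<forall>e>0. \<exists>N. \<forall>m\<ge>N. \<forall>n\<ge>N. C1norm K (\<lambda>z. F m z - F n z) < e"
    and quot: "\<forall>x\<in>K. \<exists>C>0. \<forall>h\<in>C1 K. \<forall>y\<in>K - {x}. \<bar>h y - h x\<bar> / norm (y - x) \<le> C * C1norm K h"
  shows "cont_deriv_on K f g"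
  unfolding cont_deriv_on_def
proof (intro conjI ballI)
  show "continuous_on K g"
    using cd by (intro uniform_limit_theorem[OF _ Gg]) (auto simp: cont_deriv_on_def)
  fix x assume x: "x \<in> K"
  obtain C where "C > 0"
    and C: "\<forall>h\<in>C1 K. \<forall>y\<in>K - {x}. \<bar>h y - h x\<bar> / norm (y - x) \<le> C * C1norm K h"
    using quot x by blast
  show "((\<lambda>y. (f y - f x - inner (g x) (y - x)) / norm (y - x)) \<longlongrightarrow> 0) (at x within K)"
  proof (rule remainder_tendsto_zero_if_approximable)
    fix e :: real assume "e > 0"
    obtain N1 where N1: "\<forall>m\<ge>N1. \<forall>n\<ge>N1. C1norm K (\<lambda>z. F m z - F n z) < e / C"
      using cauchy divide_pos_pos[OF \<open>e > 0\<close> \<open>C > 0\<close>] by blast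
    obtain N2 where N2: "\<forall>n\<ge>N2. \<forall>z\<in>K. dist (G n z) (g z) < e"
      using Gg \<open>e > 0\<close> unfolding uniform_limit_sequentially_iff by blast
    define n where "n = max N1 N2"
    have "\<bar>(f y - F n y) - (f x - F n x)\<bar> \<le> e * norm (y - x)" if y: "y \<in> K - {x}" for y
    proof -
      have "\<bar>(f y - F n y) - (f x - F n x)\<bar> / norm (y - x) \<le> C * (e / C)"
        using N1 cd \<open>C > 0\<close> tendsto_uniform_limitI[OF Ff]
        by (intro diff_quotient_of_limit_le[OF x y _ C, of F f N1])
          (auto simp: n_def mem_C1_iff less_imp_le)
      then show ?thesis using y \<open>C > 0\<close> by (simp add: divide_le_eq)
    qed
    moreover have "norm (g x - G n x) \<le> e"
      using N2 x by (auto simp: n_def dist_norm norm_minus_commute less_imp_le)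
    moreover have "((\<lambda>y. (F n y - F n x - inner (G n x) (y - x)) / norm (y - x)) \<longlongrightarrow> 0) (at x within K)"
      using cd[of n] x by (auto simp: cont_deriv_on_def)
    ultimately show "\<exists>F G. ((\<lambda>y. (F y - F x - inner G (y - x)) / norm (y - x)) \<longlongrightarrow> 0) (at x within K)
      \<and> (\<forall>y\<in>K - {x}. \<bar>(f y - F y) - (f x - F x)\<bar> \<le> e * norm (y - x)) \<and> norm (g x - G) \<le> e"
      by blast
  qed
qed

lemma J1_banach_if_diff_quotient_bounded:
  assumes K: "compact K"
    and quot: "\<forall>x\<in>K. \<exists>C>0. \<forall>f\<in>C1 K. \<forall>y\<in>K - {x}. \<bar>f y - f x\<bar> / norm (y - x) \<le> C * C1norm K f"
  shows "J1_banach K"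
  unfolding J1_banach_def
proof (intro allI impI)
  fix s :: "nat \<Rightarrow> ('a \<Rightarrow> real) \<times> ('a \<Rightarrow> 'a)"
  assume "(\<forall>n. s n \<in> J1 K) \<and> (\<forall>e>0. \<exists>N. \<forall>m\<ge>N. \<forall>n\<ge>N. J1norm K (pair_diff (s m) (s n)) < e)"
  then have J: "\<And>n. s n \<in> J1 K"
    and cauchy: "\<forall>e>0. \<exists>N. \<forall>m\<ge>N. \<forall>n\<ge>N. J1norm K (pair_diff (s m) (s n)) < e" by blast+
  obtain f where Ff: "uniform_limit K (\<lambda>n. fst (s n)) f sequentially"
    using Cauchy_uniformly_convergent[OF J1_Cauchy_imp_uniformly_Cauchy(1)[OF K J cauchy]]
    unfolding uniformly_convergent_on_def by blast
  obtain g where Gg: "uniform_limit K (\<lambda>n. snd (s n)) g sequentially"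
    using Cauchy_uniformly_convergent[OF J1_Cauchy_imp_uniformly_Cauchy(2)[OF K J cauchy]]
    unfolding uniformly_convergent_on_def by blast
  have "C1norm K (\<lambda>z. fst (s m) z - fst (s n) z) \<le> J1norm K (pair_diff (s m) (s n))" for m n
    using C1norm_fst_le_J1norm[OF K J1_diff[OF J J]] by simp
  then have "\<forall>e>0. \<exists>N. \<forall>m\<ge>N. \<forall>n\<ge>N. C1norm K (\<lambda>z. fst (s m) z - fst (s n) z) < e"
    using cauchy by (meson le_less_trans)
  then have "(f, g) \<in> J1 K"
    using cont_deriv_on_uniform_limit[OF K _ Ff Gg _ quot] J by (simp add: mem_J1_iff)
  moreover have "(\<lambda>n. J1norm K (pair_diff (s n) (f, g))) \<longlonglongrightarrow> 0"
    using tendsto_add[OF supnorm_tendsto_zero_if_uniform_limit[OF Ff]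
        supnorm_tendsto_zero_if_uniform_limit[OF Gg]]
    by (simp add: J1norm_def)
  ultimately show "\<exists>l\<in>J1 K. (\<lambda>n. J1norm K (pair_diff (s n) l)) \<longlonglongrightarrow> 0" by blast
qed

section \<open>Completeness passes from \<open>J1\<close> to \<open>C1\<close>\<close>

lemma J1_lifts_of_fast_sequence:
  assumes K: "compact K" and s: "\<And>k. s k \<in> C1 K"
    and fast: "\<And>k. C1norm K (\<lambda>x. s (Suc k) x - s k x) < (1/2)^k"
  obtains D where "\<And>k. cont_deriv_on K (s k) (D k)"
    "\<And>k. J1norm K (pair_diff (s (Suc k), D (Suc k)) (s k, D k)) < (1/2)^k"
proof -
  have "\<exists>dg. cont_deriv_on K (s (Suc k)) dg \<and> J1norm K (pair_diff (s (Suc k), dg) (s k, df)) < (1/2)^k"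
    if "cont_deriv_on K (s k) df" for k df
    using J1_lift_of_C1norm_less[OF K that s fast] by blast
  moreover have "\<exists>df. cont_deriv_on K (s 0) df" using s mem_C1_iff by blast
  ultimately show ?thesis
    using dependent_nat_choice[of "\<lambda>k df. cont_deriv_on K (s k) df"
        "\<lambda>k df df'. J1norm K (pair_diff (s (Suc k), df') (s k, df)) < (1/2)^k"] that by blast
qed

lemma C1_banach_if_J1_banach:
  assumes K: "compact K" and J1: "J1_banach K"
  shows "C1_banach K"
  unfolding C1_banach_def
proof (intro allI impI)
  fix s :: "nat \<Rightarrow> 'a \<Rightarrow> real"
  assume "(\<forall>n. s n \<in> C1 K) \<and> (\<forall>e>0. \<exists>N. \<forall>m\<ge>N. \<forall>n\<ge>N. C1norm K (\<lambda>x. s m x - s n x) < e)"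
  then have s: "\<And>n. s n \<in> C1 K"
    and cauchy: "\<forall>e>0. \<exists>N. \<forall>m\<ge>N. \<forall>n\<ge>N. C1norm K (\<lambda>x. s m x - s n x) < e" by blast+
  obtain r where r: "strict_mono r"
    and fast: "\<And>k m n. r k \<le> m \<Longrightarrow> r k \<le> n \<Longrightarrow> C1norm K (\<lambda>x. s m x - s n x) < (1/2)^k"
    using fast_subsequence[of "\<lambda>m n. C1norm K (\<lambda>x. s m x - s n x)"] cauchy by blast
  have "C1norm K (\<lambda>x. s (r (Suc k)) x - s (r k) x) < (1/2)^k" for k
    using r by (intro fast) (auto simp: strict_mono_less_eq)
  then obtain D where D: "\<And>k. cont_deriv_on K (s (r k)) (D k)"
    and step: "\<And>k. J1norm K (pair_diff (s (r (Suc k)), D (Suc k)) (s (r k), D k)) < (1/2)^k"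
    using J1_lifts_of_fast_sequence[of K "s \<circ> r"] K s by auto
  define p where "p k = (s (r k), D k)" for k
  have p: "p k \<in> J1 K" for k using D by (simp add: p_def mem_J1_iff)
  have geometric: "J1norm K (pair_diff (p m) (p n)) \<le> 2 * (1/2)^n" if "n \<le> m" for m n
  proof -
    have "(\<Sum>j\<in>{n..<m}. J1norm K (pair_diff (p (Suc j)) (p j))) \<le> (\<Sum>j\<in>{n..<m}. (1/2::real)^j)"
      using step by (intro sum_mono) (simp add: p_def less_imp_le)
    then show ?thesis
      using J1norm_telescope[where p = p, OF K p that] sum_half_powers_le[of n m] by linarith
  qed
  have "\<forall>e>0. \<exists>N. \<forall>m\<ge>N. \<forall>n\<ge>N. J1norm K (pair_diff (p m) (p n)) < e"
    using cauchy_if_geometric[OF geometric J1norm_minus_commute] by simp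
  then obtain l where l: "l \<in> J1 K" and lim: "(\<lambda>k. J1norm K (pair_diff (p k) l)) \<longlonglongrightarrow> 0"
    using J1 p unfolding J1_banach_def by blast
  have g: "fst l \<in> C1 K" using l by (auto simp: mem_J1_iff mem_C1_iff)
  have "norm (C1norm K (\<lambda>x. s (r k) x - fst l x)) \<le> J1norm K (pair_diff (p k) l)" for k
    using C1norm_fst_le_J1norm[OF K J1_diff[OF p l]] C1norm_nonneg[OF K C1_diff[OF s g]]
    by (simp add: p_def)
  then have "(\<lambda>k. C1norm K (\<lambda>x. s (r k) x - fst l x)) \<longlonglongrightarrow> 0"
    by (intro Lim_null_comparison[OF _ lim]) simp
  then show "\<exists>g\<in>C1 K. (\<lambda>n. C1norm K (\<lambda>x. s n x - g x)) \<longlonglongrightarrow> 0"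
    using C1norm_tendsto_if_subseq[OF K s g cauchy r] g by blast
qed

section \<open>Completeness of \<open>C1\<close> bounds the difference quotients\<close>

lemma C1_hump:
  assumes K: "compact K" and x: "x \<in> K"
    and unbounded: "\<forall>C>0. \<exists>f\<in>C1 K. \<exists>y\<in>K - {x}. C * C1norm K f < \<bar>f y - f x\<bar> / norm (y - x)"
    and S: "S \<in> C1 K" and "\<rho> > 0"
  shows "\<exists>T\<in>C1 K. C1norm K (\<lambda>z. T z - S z) \<le> \<rho> \<and> (\<exists>y\<in>K - {x}. c * norm (y - x) \<le> \<bar>T y - T x\<bar>)"
proof -
  obtain M where M: "\<forall>y\<in>K - {x}. \<bar>S y - S x\<bar> / norm (y - x) \<le> M" "0 \<le> M"
    using C1_diff_quotient_bounded[OF K S x] by (meson order_trans max.cobounded1 max.cobounded2)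
  define C where "C = (M + \<bar>c\<bar> + 1) / \<rho>"
  have "C > 0" using M(2) \<open>\<rho> > 0\<close> by (simp add: C_def)
  then obtain f y where f: "f \<in> C1 K" and y: "y \<in> K - {x}"
    and big: "C * C1norm K f < \<bar>f y - f x\<bar> / norm (y - x)"
    using unbounded by blast
  define d where "d = norm (y - x)"
  have "d > 0" using y by (simp add: d_def)
  define \<nu> where "\<nu> = C1norm K f"
  have "\<nu> > 0"
  proof (rule ccontr)
    assume "\<not> \<nu> > 0"
    then have "\<nu> = 0" using C1norm_nonneg[OF K f] by (simp add: \<nu>_def)
    then have "f y = 0" "f x = 0" using abs_le_C1norm[OF K f] x y by (fastforce simp: \<nu>_def)+
    then show False using big \<open>\<nu> = 0\<close> by (simp add: \<nu>_def)
  qed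
  \<comment> \<open>rescale the witness to C1 norm \<open>\<rho>\<close>; its slope at \<open>x\<close> still beats that of \<open>S\<close> by \<open>c\<close>\<close>
  define h where "h = (\<lambda>z. (\<rho> / \<nu>) * f z)"
  have h: "h \<in> C1 K" unfolding h_def by (rule C1_scale[OF f])
  have "C1norm K h \<le> \<rho>"
    using C1norm_scale_le[OF K f, of "\<rho> / \<nu>"] \<open>\<rho> > 0\<close> \<open>\<nu> > 0\<close> by (simp add: h_def \<nu>_def)
  have "(M + \<bar>c\<bar> + 1) * d < \<bar>h y - h x\<bar>"
  proof -
    have "C * \<nu> * d < \<bar>f y - f x\<bar>"
      using big \<open>d > 0\<close> by (simp add: d_def \<nu>_def pos_less_divide_eq)
    then have "\<rho> / \<nu> * (C * \<nu> * d) < \<rho> / \<nu> * \<bar>f y - f x\<bar>"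
      using \<open>\<rho> > 0\<close> \<open>\<nu> > 0\<close> by (intro mult_strict_left_mono) auto
    moreover have "\<rho> / \<nu> * (C * \<nu> * d) = (M + \<bar>c\<bar> + 1) * d"
      using \<open>\<rho> > 0\<close> \<open>\<nu> > 0\<close> by (simp add: C_def)
    moreover have "h y - h x = \<rho> / \<nu> * (f y - f x)" by (simp add: h_def right_diff_distrib)
    then have "\<bar>h y - h x\<bar> = \<rho> / \<nu> * \<bar>f y - f x\<bar>"
      using \<open>\<rho> > 0\<close> \<open>\<nu> > 0\<close> by (simp add: abs_mult)
    ultimately show ?thesis by simp
  qed
  then have "M * d + \<bar>c\<bar> * d + d < \<bar>h y - h x\<bar>" by (simp add: distrib_right)
  moreover have "\<bar>S y - S x\<bar> \<le> M * d"
    using M(1) y \<open>d > 0\<close> by (simp add: d_def divide_le_eq)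
  moreover have "c * d \<le> \<bar>c\<bar> * d" using \<open>d > 0\<close> by (simp add: mult_right_mono)
  ultimately have "c * d \<le> \<bar>h y - h x\<bar> - \<bar>S y - S x\<bar>" using \<open>d > 0\<close> by linarith
  also have "\<dots> \<le> \<bar>(S y + h y) - (S x + h x)\<bar>" by linarith
  finally have "c * norm (y - x) \<le> \<bar>(S y + h y) - (S x + h x)\<bar>" by (simp add: d_def)
  moreover have "C1norm K (\<lambda>z. (S z + h z) - S z) \<le> \<rho>" using \<open>C1norm K h \<le> \<rho>\<close> by simp
  ultimately show ?thesis using C1_add[OF S h] y by (intro bexI[of _ "\<lambda>z. S z + h z"]) auto
qed

lemma gliding_hump_steps:
  assumes K: "compact K" and x: "x \<in> K"
    and unbounded: "\<forall>C>0. \<exists>f\<in>C1 K. \<exists>y\<in>K - {x}. C * C1norm K f < \<bar>f y - f x\<bar> / norm (y - x)"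
  obtains S :: "nat \<Rightarrow> 'a::euclidean_space \<Rightarrow> real" and \<rho> y
  where "\<And>k. S k \<in> C1 K" "\<And>k. 0 < \<rho> k" "\<And>k. \<rho> k \<le> 1" "\<And>k. y k \<in> K - {x}"
    "\<And>k. (real k + 1) * norm (y k - x) \<le> \<bar>S (Suc k) (y k) - S (Suc k) x\<bar>"
    "\<And>k. C1norm K (\<lambda>z. S (Suc k) z - S k z) \<le> \<rho> k * (1/2)^(k+2)"
    "\<And>k. \<rho> (Suc k) = min (\<rho> k) (norm (y k - x))"
proof -
  \<comment> \<open>\<open>\<rho> (Suc k) \<le> norm (y k - x)\<close> makes every later hump too small to undo the slope at \<open>y k\<close>\<close>
  let ?P = "\<lambda>k st. fst st \<in> C1 K \<and> 0 < snd st \<and> snd st \<le> (1::real)"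
  let ?Q = "\<lambda>k st st'. C1norm K (\<lambda>z. fst st' z - fst st z) \<le> snd st * (1/2)^(k+2)
    \<and> (\<exists>y. y \<in> K - {x} \<and> (real k + 1) * norm (y - x) \<le> \<bar>fst st' y - fst st' x\<bar>
                    \<and> snd st' = min (snd st) (norm (y - x)))"
  have "\<exists>st'. ?P (Suc k) st' \<and> ?Q k st st'" if P: "?P k st" for k st
  proof -
    have "0 < snd st * (1/2)^(k+2)" using P by simp
    then obtain T y where "T \<in> C1 K" "C1norm K (\<lambda>z. T z - fst st z) \<le> snd st * (1/2)^(k+2)"
      "y \<in> K - {x}" "(real k + 1) * norm (y - x) \<le> \<bar>T y - T x\<bar>"
      using C1_hump[OF K x unbounded, of "fst st" _ "real k + 1"] P by blast
    then show ?thesis using P by (intro exI[of _ "(T, min (snd st) (norm (y - x)))"]) auto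
  qed
  moreover have "?P 0 (\<lambda>z. 0, 1)" using cont_deriv_on_zero by (auto simp: mem_C1_iff)
  ultimately obtain st where st: "\<And>k. ?P k (st k) \<and> ?Q k (st k) (st (Suc k))"
    using dependent_nat_choice[of ?P ?Q] by blast
  then obtain y where "\<forall>k. y k \<in> K - {x}
      \<and> (real k + 1) * norm (y k - x) \<le> \<bar>fst (st (Suc k)) (y k) - fst (st (Suc k)) x\<bar>
      \<and> snd (st (Suc k)) = min (snd (st k)) (norm (y k - x))"
    using choice[of "\<lambda>k y. y \<in> K - {x}
      \<and> (real k + 1) * norm (y - x) \<le> \<bar>fst (st (Suc k)) y - fst (st (Suc k)) x\<bar>
      \<and> snd (st (Suc k)) = min (snd (st k)) (norm (y - x))"] by blast
  then show ?thesis using that[of "\<lambda>k. fst (st k)" "\<lambda>k. snd (st k)" y] st by blast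
qed

lemma gliding_hump:
  assumes K: "compact K" and x: "x \<in> K"
    and unbounded: "\<forall>C>0. \<exists>f\<in>C1 K. \<exists>y\<in>K - {x}. C * C1norm K f < \<bar>f y - f x\<bar> / norm (y - x)"
  obtains S :: "nat \<Rightarrow> 'a::euclidean_space \<Rightarrow> real" and y
  where "\<And>k. S k \<in> C1 K" "\<And>k. y k \<in> K - {x}"
    "\<And>k. (real k + 1) * norm (y k - x) \<le> \<bar>S (Suc k) (y k) - S (Suc k) x\<bar>"
    "\<And>m n. n \<le> m \<Longrightarrow> C1norm K (\<lambda>z. S m z - S n z) \<le> (1/2)^n"
    "\<And>k n. Suc k \<le> n \<Longrightarrow> C1norm K (\<lambda>z. S n z - S (Suc k) z) \<le> norm (y k - x) / 2"
proof -
  obtain S \<rho> y where S: "\<And>k. S k \<in> C1 K" and \<rho>: "\<And>k. 0 < \<rho> k" "\<And>k. \<rho> k \<le> 1"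
    and y: "\<And>k. y k \<in> K - {x}" "\<And>k. (real k + 1) * norm (y k - x) \<le> \<bar>S (Suc k) (y k) - S (Suc k) x\<bar>"
    and step: "\<And>k. C1norm K (\<lambda>z. S (Suc k) z - S k z) \<le> \<rho> k * (1/2)^(k+2)"
    and \<rho>_Suc: "\<And>k. \<rho> (Suc k) = min (\<rho> k) (norm (y k - x))"
    using gliding_hump_steps[OF K x unbounded] by blast
  have \<rho>_mono: "\<rho> m \<le> \<rho> n" if "n \<le> m" for m n
    using lift_Suc_antimono_le[of \<rho>, OF _ that] \<rho>_Suc by simp
  have tail: "C1norm K (\<lambda>z. S m z - S n z) \<le> B * (1/2)^n / 2"
    if "n \<le> m" "\<And>j. n \<le> j \<Longrightarrow> \<rho> j \<le> B" for m n B
  proof -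
    have "(\<Sum>j\<in>{n..<m}. C1norm K (\<lambda>z. S (Suc j) z - S j z)) \<le> (\<Sum>j\<in>{n..<m}. \<rho> j * (1/2)^(j+2))"
      using step by (rule sum_mono)
    also have "\<dots> \<le> B * (1/2)^n / 2"
      using that(2) \<rho>(1)[of n] by (intro sum_weighted_half_powers_le) force+
    finally show ?thesis using C1norm_telescope[where S = S, OF K S that(1)] by linarith
  qed
  show ?thesis
  proof (rule that[OF S y])
    show "C1norm K (\<lambda>z. S m z - S n z) \<le> (1/2)^n" if "n \<le> m" for m n
      using tail[OF that \<rho>(2)] C1norm_nonneg[OF K C1_diff[OF S S], of m n] by simp
    fix k n assume "Suc k \<le> n"
    have "\<rho> j \<le> norm (y k - x)" if "Suc k \<le> j" for j
      using \<rho>_mono[OF that] \<rho>_Suc[of k] by simp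
    then have "C1norm K (\<lambda>z. S n z - S (Suc k) z) \<le> norm (y k - x) * (1/2)^Suc k / 2"
      using tail[OF \<open>Suc k \<le> n\<close>] by blast
    also have "\<dots> \<le> norm (y k - x) / 2"
      using mult_left_le[OF power_le_one[of "1/2::real" "Suc k"] norm_ge_zero[of "y k - x"]] by simp
    finally show "C1norm K (\<lambda>z. S n z - S (Suc k) z) \<le> norm (y k - x) / 2" .
  qed
qed

lemma diff_quotient_bounded_if_C1_banach:
  assumes K: "compact K" and banach: "C1_banach K"
  shows "\<forall>x\<in>K. \<exists>C>0. \<forall>f\<in>C1 K. \<forall>y\<in>K - {x}. \<bar>f y - f x\<bar> / norm (y - x) \<le> C * C1norm K f"
proof (rule ballI, rule ccontr)
  fix x assume x: "x \<in> K"
    and "\<not> (\<exists>C>0. \<forall>f\<in>C1 K. \<forall>y\<in>K - {x}. \<bar>f y - f x\<bar> / norm (y - x) \<le> C * C1norm K f)"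
  then have "\<forall>C>0. \<exists>f\<in>C1 K. \<exists>y\<in>K - {x}. C * C1norm K f < \<bar>f y - f x\<bar> / norm (y - x)"
    by (auto simp: not_le)
  then obtain S y where S: "\<And>k. S k \<in> C1 K" and y: "\<And>k. y k \<in> K - {x}"
    and hump: "\<And>k. (real k + 1) * norm (y k - x) \<le> \<bar>S (Suc k) (y k) - S (Suc k) x\<bar>"
    and geometric: "\<And>m n. n \<le> m \<Longrightarrow> C1norm K (\<lambda>z. S m z - S n z) \<le> (1/2)^n"
    and tail: "\<And>k n. Suc k \<le> n \<Longrightarrow> C1norm K (\<lambda>z. S n z - S (Suc k) z) \<le> norm (y k - x) / 2"
    using gliding_hump[OF K x] by blast
  have "\<forall>e>0. \<exists>N. \<forall>m\<ge>N. \<forall>n\<ge>N. C1norm K (\<lambda>z. S m z - S n z) < e"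
    using cauchy_if_geometric[where c = 1, OF _ C1norm_minus_commute[OF K S S]] geometric by simp
  then obtain g where g: "g \<in> C1 K" and lim: "(\<lambda>n. C1norm K (\<lambda>z. S n z - g z)) \<longlonglongrightarrow> 0"
    using banach S unfolding C1_banach_def by blast
  obtain M where M: "\<forall>z\<in>K - {x}. \<bar>g z - g x\<bar> / norm (z - x) \<le> M"
    using C1_diff_quotient_bounded[OF K g x] by blast
  define k where "k = nat \<lceil>M\<rceil> + 1"
  define d where "d = norm (y k - x)"
  have "d > 0" using y[of k] by (simp add: d_def)
  have far: "real k * d \<le> \<bar>S n (y k) - S n x\<bar>" if "Suc k \<le> n" for n
  proof -
    have close: "\<bar>S n z - S (Suc k) z\<bar> \<le> d / 2" if "z \<in> K" for z
      using abs_le_C1norm[OF K C1_diff[OF S S] that, of n "Suc k"] tail[OF \<open>Suc k \<le> n\<close>]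
      unfolding d_def by linarith
    have "y k \<in> K" using y[of k] by simp
    then show ?thesis
      using close[OF \<open>y k \<in> K\<close>] close[OF x] hump[of k] unfolding d_def
      by (simp add: algebra_simps) (smt (verit))
  qed
  have "(\<lambda>n. \<bar>S n (y k) - S n x\<bar>) \<longlonglongrightarrow> \<bar>g (y k) - g x\<bar>"
    using C1norm_tendsto_imp_pointwise[OF K S g lim] x y by (intro tendsto_intros) auto
  then have "real k * d \<le> \<bar>g (y k) - g x\<bar>"
    by (rule LIMSEQ_le_const) (use far in blast)
  moreover have "\<bar>g (y k) - g x\<bar> \<le> M * d"
    using M y[of k] \<open>d > 0\<close> by (simp add: d_def divide_le_eq)
  moreover have "M < real k" unfolding k_def by linarith
  ultimately show False using mult_strict_right_mono[OF \<open>M < real k\<close> \<open>d > 0\<close>] by linarith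
qed

theorem mainTheorem7:
  fixes K :: "'a::euclidean_space set"
  assumes "compact K"
  shows "(J1_banach K \<longleftrightarrow> C1_banach K) \<and>
         (C1_banach K \<longleftrightarrow>
           (\<forall>x\<in>K. \<exists>C>0. \<forall>f\<in>C1 K. \<forall>y\<in>K - {x}.
              \<bar>f y - f x\<bar> / norm (y - x) \<le> C * C1norm K f))"
  using C1_banach_if_J1_banach[OF assms] diff_quotient_bounded_if_C1_banach[OF assms]
    J1_banach_if_diff_quotient_bounded[OF assms] by blast

end
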